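(* Let $T$ be an argumentation theory, $G(T)$ its full grounding, and $G_{DL}(T)$ its grounding via the Datalog program $P_T$ of Transformation 1 (as in the context). Then for every semantics $\mathsf{sem}\in\{\text{complete},\text{grounded},\text{preferred},\text{stable}\}$, $$\mathsf{sem}(T)=\mathsf{sem}(G(T))=\mathsf{sem}(G_{DL}(T)),$$ where $\mathsf{sem}(G)$ denotes the set of $\mathsf{sem}$-extensions of the abstract argumentation framework $(\mathrm{Args}(G),\mathrm{Att}(G))$ and $\mathsf{sem}(T)$ is defined as $\mathsf{sem}(G(T))$.
   Context: Work over a function-free first-order signature (predicates and constants); atoms are $p(t_1,\dots,t_k)$ with each $t_i$ a constant or variable. An argumentation theory is $T=(K_n,K_p,R_s,R_d,C,\mathsf{n})$ where: $K_n$ (axioms) and $K_p$ (ordinary premises) are finite sets of ground atoms; $R_s$ (strict rules) is a finite set of rules $b_1(\vec X_1),\dots,b_m(\vec X_m)\to h(\vec Y)$ and $R_d$ (defeasible rules) a finite set of rules $b_1(\vec X_1),\dots,b_m(\vec X_m)\Rightarrow h(\vec Y)$, where every variable of the head occurs in the body; each $r\in R_d$ carries a name atom $\mathsf{n}(r)=\nu_r(\vec Z)$ whose variables occur in the body of $r$; $C$ is a finite set of contrariness rules $c: s(\vec X)\rightsquigarrow S(\vec X)$, where $s(\vec X)$ is an atom and $S(\vec X)$ a finite set of atoms whose variables occur in $\vec X$. The Herbrand universe $HU(T)$ is the set of constants occurring in $T$; a ground substitution maps variables to $HU(T)$, and for a rule or contrariness rule $x$ and ground substitution $\sigma$, $x\sigma$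 is its ground instance (with $\mathsf{n}(r\sigma)=\mathsf{n}(r)\sigma$). The full grounding $G(T)$ has the same $K_n,K_p$, and as rules and contrariness rules all ground instances $x\sigma$ of those of $T$. For a ground theory $G$ with premises $K_n\cup K_p$, rules $R$ and contrariness rules $C'$: arguments are defined inductively: each $k\in K_n\cup K_p$ is an argument with conclusion $\mathrm{conc}=k$, premises $\mathrm{Prem}=\{k\}$, no rules; if $A_1,\dots,A_m$ are arguments and $r\in R$ is a ground rule with body $\mathrm{conc}(A_1),\dots,\mathrm{conc}(A_m)$ and head $h$, then $A=\langle A_1,\dots,A_m\to h\rangle$ is an argument with $\mathrm{conc}(A)=h$, top rule $\mathrm{top}(A)=r$, $\mathrm{Prem}(A)=\bigcup_i\mathrm{Prem}(A_i)$, $\mathrm{Rules}(A)=\{r\}\cup\bigcup_i\mathrm{Rules}(A_i)$, and subarguments $\mathrm{Sub}(A)=\{A\}\cup\bigcup_i\mathrm{Sub}(A_i)$. The weak points of $A$ are $\mathrm{wp}(A)=(\mathrm{Prem}(A)\cap K_p)\cup\bigcup_{r\in\mathrm{Rules}(A)\cap R_d}\{\mathrm{head}(r),\mathsf{n}(r)\}$. Argument $A$ attacks $A'$ iff there is a ground contrariness rule $s\rightsquigarrow S$ in $C'$ with $s\in\mathrm{wp}(A')$ and $\mathrm{conc}(A)\in S$. $\mathrm{Args}(G)$ and $\mathrm{Att}(G)$ denote the set of arguments and the attack relation. Transformation 1: the Datalog program $P_T$ contains the fact $k.$ for every $k\in K_n\cup K_p$, and for every rule $r\in R_s\cup R_d$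 with body $b_1(\vec X_1),\dots,b_m(\vec X_m)$, head $h(\vec Y)$ and variable list $\vec X$ (all variables of $r$), with a fresh predicate $\mathrm{aux}_r$: the rules $\mathrm{aux}_r(\vec X)\leftarrow b_1(\vec X_1),\dots,b_m(\vec X_m)$ and $h(\vec Y)\leftarrow \mathrm{aux}_r(\vec X)$, and, if $r\in R_d$ with $\mathsf{n}(r)=\nu_r(\vec Z)$, additionally $\nu_r(\vec Z)\leftarrow\mathrm{aux}_r(\vec X)$. Let $M$ be the least Herbrand model of $P_T$. The grounding via Datalog $G_{DL}(T)$ has premises $K_n,K_p$, rules $\{r\sigma : r\in R_s\cup R_d,\ \mathrm{aux}_r(\vec X)\sigma\in M\}$ (strict/defeasible as $r$), and contrariness rules $\{c\sigma: c=(s(\vec X)\rightsquigarrow S(\vec X))\in C,\ s(\vec X)\sigma\in M\}$. Complete, grounded, preferred and stable extensions are those of Dung's abstract argumentation frameworks. *)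

theory Defs
  imports Main
begin

datatype ('c, 'v) trm = Cst 'c | Var 'v

type_synonym ('p, 'c, 'v) atom = "'p \<times> ('c, 'v) trm list"
type_synonym ('p, 'c) gatom = "'p \<times> 'c list"

fun trm_vars :: "('c, 'v) trm \<Rightarrow> 'v set" where
  "trm_vars (Cst c) = {}"
| "trm_vars (Var x) = {x}"

fun trm_consts :: "('c, 'v) trm \<Rightarrow> 'c set" where
  "trm_consts (Cst c) = {c}"
| "trm_consts (Var x) = {}"

definition atom_vars :: "('p, 'c, 'v) atom \<Rightarrow> 'v set" where
  "atom_vars a = (\<Union>t \<in> set (snd a). trm_vars t)"

definition atom_consts :: "('p, 'c, 'v) atom \<Rightarrow> 'c set" where
  "atom_consts a = (\<Union>t \<in> set (snd a). trm_consts t)"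

fun trm_inst :: "('v \<Rightarrow> 'c) \<Rightarrow> ('c, 'v) trm \<Rightarrow> 'c" where
  "trm_inst \<sigma> (Cst c) = c"
| "trm_inst \<sigma> (Var x) = \<sigma> x"

definition inst :: "('v \<Rightarrow> 'c) \<Rightarrow> ('p, 'c, 'v) atom \<Rightarrow> ('p, 'c) gatom" where
  "inst \<sigma> a = (fst a, map (trm_inst \<sigma>) (snd a))"

text \<open>A strict rule is a pair (body, head); a defeasible rule is a triple
 (body, head, name atom); a contrariness rule is a pair (s, S).\<close>

type_synonym ('p, 'c, 'v) srule = "('p, 'c, 'v) atom list \<times> ('p, 'c, 'v) atom"
type_synonym ('p, 'c, 'v) drule = "('p, 'c, 'v) atom list \<times> ('p, 'c, 'v) atom \<times> ('p, 'c, 'v) atom"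
type_synonym ('p, 'c, 'v) crule = "('p, 'c, 'v) atom \<times> ('p, 'c, 'v) atom set"

record ('p, 'c, 'v) arg_theory =
  Kn :: "('p, 'c) gatom set"
  Kp :: "('p, 'c) gatom set"
  Rs :: "('p, 'c, 'v) srule set"
  Rd :: "('p, 'c, 'v) drule set"
  Cr :: "('p, 'c, 'v) crule set"

definition srule_vars :: "('p, 'c, 'v) srule \<Rightarrow> 'v set" where
  "srule_vars r = (\<Union>a \<in> set (fst r). atom_vars a) \<union> atom_vars (snd r)"

definition drule_vars :: "('p, 'c, 'v) drule \<Rightarrow> 'v set" where
  "drule_vars r = (case r of (b, h, n) \<Rightarrow>
     (\<Union>a \<in> set b. atom_vars a) \<union> atom_vars h \<union> atom_vars n)"

definition crule_vars :: "('p, 'c, 'v) crule \<Rightarrow> 'v set" where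
  "crule_vars c = atom_vars (fst c) \<union> (\<Union>a \<in> snd c. atom_vars a)"

definition gatom_consts :: "('p, 'c) gatom \<Rightarrow> 'c set" where
  "gatom_consts a = set (snd a)"

definition wf_theory :: "('p, 'c, 'v) arg_theory \<Rightarrow> bool" where
  "wf_theory T \<longleftrightarrow>
     finite (Kn T) \<and> finite (Kp T) \<and> finite (Rs T) \<and> finite (Rd T) \<and> finite (Cr T) \<and>
     (\<forall>(b, h) \<in> Rs T. atom_vars h \<subseteq> (\<Union>a \<in> set b. atom_vars a)) \<and>
     (\<forall>(b, h, n) \<in> Rd T. atom_vars h \<subseteq> (\<Union>a \<in> set b. atom_vars a)
                        \<and> atom_vars n \<subseteq> (\<Union>a \<in> set b. atom_vars a)) \<and>
     (\<forall>(s, S) \<in> Cr T. finite S \<and> (\<forall>a \<in> S. atom_vars a \<subseteq> atom_vars s))"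

definition HU :: "('p, 'c, 'v) arg_theory \<Rightarrow> 'c set" where
  "HU T = (\<Union>a \<in> Kn T \<union> Kp T. gatom_consts a)
        \<union> (\<Union>(b, h) \<in> Rs T. (\<Union>a \<in> set b. atom_consts a) \<union> atom_consts h)
        \<union> (\<Union>(b, h, n) \<in> Rd T. (\<Union>a \<in> set b. atom_consts a) \<union> atom_consts h \<union> atom_consts n)
        \<union> (\<Union>(s, S) \<in> Cr T. atom_consts s \<union> (\<Union>a \<in> S. atom_consts a))"

definition ground_subst :: "'c set \<Rightarrow> 'v set \<Rightarrow> ('v \<Rightarrow> 'c) \<Rightarrow> bool" where
  "ground_subst U V \<sigma> \<longleftrightarrow> (\<forall>x \<in> V. \<sigma> x \<in> U)"

datatype ('p, 'c) grule =
    GS "('p, 'c) gatom list" "('p, 'c) gatom"                  \<comment> \<open>strict: body, head\<close>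
  | GD "('p, 'c) gatom list" "('p, 'c) gatom" "('p, 'c) gatom" \<comment> \<open>defeasible: body, head, name\<close>

fun gbody :: "('p, 'c) grule \<Rightarrow> ('p, 'c) gatom list" where
  "gbody (GS b h) = b"
| "gbody (GD b h n) = b"

fun ghead :: "('p, 'c) grule \<Rightarrow> ('p, 'c) gatom" where
  "ghead (GS b h) = h"
| "ghead (GD b h n) = h"

record ('p, 'c) gtheory =
  gKn :: "('p, 'c) gatom set"
  gKp :: "('p, 'c) gatom set"
  gR :: "('p, 'c) grule set"
  gC :: "(('p, 'c) gatom \<times> ('p, 'c) gatom set) set"

definition inst_s :: "('v \<Rightarrow> 'c) \<Rightarrow> ('p, 'c, 'v) srule \<Rightarrow> ('p, 'c) grule" where
  "inst_s \<sigma> r = GS (map (inst \<sigma>) (fst r)) (inst \<sigma> (snd r))"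

definition inst_d :: "('v \<Rightarrow> 'c) \<Rightarrow> ('p, 'c, 'v) drule \<Rightarrow> ('p, 'c) grule" where
  "inst_d \<sigma> r = (case r of (b, h, n) \<Rightarrow> GD (map (inst \<sigma>) b) (inst \<sigma> h) (inst \<sigma> n))"

definition inst_c :: "('v \<Rightarrow> 'c) \<Rightarrow> ('p, 'c, 'v) crule \<Rightarrow> ('p, 'c) gatom \<times> ('p, 'c) gatom set" where
  "inst_c \<sigma> c = (inst \<sigma> (fst c), inst \<sigma> ` snd c)"

definition full_grounding :: "('p, 'c, 'v) arg_theory \<Rightarrow> ('p, 'c) gtheory" where
  "full_grounding T =
     \<lparr> gKn = Kn T, gKp = Kp T,
       gR = {inst_s \<sigma> r | r \<sigma>. r \<in> Rs T \<and> ground_subst (HU T) (srule_vars r) \<sigma>}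
          \<union> {inst_d \<sigma> r | r \<sigma>. r \<in> Rd T \<and> ground_subst (HU T) (drule_vars r) \<sigma>},
       gC = {inst_c \<sigma> c | c \<sigma>. c \<in> Cr T \<and> ground_subst (HU T) (crule_vars c) \<sigma>} \<rparr>"

datatype ('p, 'c) argument =
    PremArg "('p, 'c) gatom"
  | RuleArg "('p, 'c) argument list" "('p, 'c) grule"

fun conc :: "('p, 'c) argument \<Rightarrow> ('p, 'c) gatom" where
  "conc (PremArg k) = k"
| "conc (RuleArg As r) = ghead r"

primrec Prem :: "('p, 'c) argument \<Rightarrow> ('p, 'c) gatom set" where
  "Prem (PremArg k) = {k}"
| "Prem (RuleArg As r) = \<Union> (set (map Prem As))"

primrec Rules :: "('p, 'c) argument \<Rightarrow> ('p, 'c) grule set" where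
  "Rules (PremArg k) = {}"
| "Rules (RuleArg As r) = {r} \<union> \<Union> (set (map Rules As))"

inductive_set Args :: "('p, 'c) gtheory \<Rightarrow> ('p, 'c) argument set" for G where
  prem: "k \<in> gKn G \<union> gKp G \<Longrightarrow> PremArg k \<in> Args G"
| rule: "r \<in> gR G \<Longrightarrow> (\<forall>A. A \<in> set As \<longrightarrow> A \<in> Args G) \<Longrightarrow> map conc As = gbody r
          \<Longrightarrow> RuleArg As r \<in> Args G"

definition wp :: "('p, 'c) gtheory \<Rightarrow> ('p, 'c) argument \<Rightarrow> ('p, 'c) gatom set" where
  "wp G A = (Prem A \<inter> gKp G) \<union> (\<Union>{{h, n} | b h n. GD b h n \<in> Rules A})"

definition attacks :: "('p, 'c) gtheory \<Rightarrow> ('p, 'c) argument \<Rightarrow> ('p, 'c) argument \<Rightarrow> bool" where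
  "attacks G A A' \<longleftrightarrow> (\<exists>(s, S) \<in> gC G. s \<in> wp G A' \<and> conc A \<in> S)"

definition Att :: "('p, 'c) gtheory \<Rightarrow> (('p, 'c) argument \<times> ('p, 'c) argument) set" where
  "Att G = {(A, A'). A \<in> Args G \<and> A' \<in> Args G \<and> attacks G A A'}"

definition conflict_free :: "'a set \<Rightarrow> ('a \<times> 'a) set \<Rightarrow> 'a set \<Rightarrow> bool" where
  "conflict_free Ar R E \<longleftrightarrow> E \<subseteq> Ar \<and> (\<forall>a \<in> E. \<forall>b \<in> E. (a, b) \<notin> R)"

definition defends :: "'a set \<Rightarrow> ('a \<times> 'a) set \<Rightarrow> 'a set \<Rightarrow> 'a \<Rightarrow> bool" where
  "defends Ar R E a \<longleftrightarrow> (\<forall>b \<in> Ar. (b, a) \<in> R \<longrightarrow> (\<exists>c \<in> E. (c, b) \<in> R))"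

definition admissible :: "'a set \<Rightarrow> ('a \<times> 'a) set \<Rightarrow> 'a set \<Rightarrow> bool" where
  "admissible Ar R E \<longleftrightarrow> conflict_free Ar R E \<and> (\<forall>a \<in> E. defends Ar R E a)"

definition complete_ext :: "'a set \<Rightarrow> ('a \<times> 'a) set \<Rightarrow> 'a set \<Rightarrow> bool" where
  "complete_ext Ar R E \<longleftrightarrow> admissible Ar R E \<and> (\<forall>a \<in> Ar. defends Ar R E a \<longrightarrow> a \<in> E)"

definition grounded_ext :: "'a set \<Rightarrow> ('a \<times> 'a) set \<Rightarrow> 'a set \<Rightarrow> bool" where
  "grounded_ext Ar R E \<longleftrightarrow> complete_ext Ar R E \<and> (\<forall>E'. complete_ext Ar R E' \<longrightarrow> E \<subseteq> E')"

definition preferred_ext :: "'a set \<Rightarrow> ('a \<times> 'a) set \<Rightarrow> 'a set \<Rightarrow> bool" where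
  "preferred_ext Ar R E \<longleftrightarrow> admissible Ar R E \<and> (\<forall>E'. admissible Ar R E' \<and> E \<subseteq> E' \<longrightarrow> E' = E)"

definition stable_ext :: "'a set \<Rightarrow> ('a \<times> 'a) set \<Rightarrow> 'a set \<Rightarrow> bool" where
  "stable_ext Ar R E \<longleftrightarrow> conflict_free Ar R E \<and> (\<forall>b \<in> Ar - E. \<exists>a \<in> E. (a, b) \<in> R)"

datatype semantics = Complete | Grounded | Preferred | Stable

fun extensions :: "semantics \<Rightarrow> 'a set \<Rightarrow> ('a \<times> 'a) set \<Rightarrow> 'a set set" where
  "extensions Complete Ar R = {E. complete_ext Ar R E}"
| "extensions Grounded Ar R = {E. grounded_ext Ar R E}"
| "extensions Preferred Ar R = {E. preferred_ext Ar R E}"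
| "extensions Stable Ar R = {E. stable_ext Ar R E}"

definition sem_ground :: "semantics \<Rightarrow> ('p, 'c) gtheory \<Rightarrow> ('p, 'c) argument set set" where
  "sem_ground s G = extensions s (Args G) (Att G)"

definition sem_theory :: "semantics \<Rightarrow> ('p, 'c, 'v) arg_theory \<Rightarrow> ('p, 'c) argument set set" where
  "sem_theory s T = sem_ground s (full_grounding T)"

record ('q, 'c, 'v) datalog =
  dl_facts :: "('q, 'c) gatom set"
  dl_rules :: "(('q, 'c, 'v) atom \<times> ('q, 'c, 'v) atom list) set"  \<comment> \<open>head, body\<close>

definition dl_rule_vars :: "('q, 'c, 'v) atom \<times> ('q, 'c, 'v) atom list \<Rightarrow> 'v set" where
  "dl_rule_vars r = atom_vars (fst r) \<union> (\<Union>a \<in> set (snd r). atom_vars a)"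

definition dl_HU :: "('q, 'c, 'v) datalog \<Rightarrow> 'c set" where
  "dl_HU P = (\<Union>a \<in> dl_facts P. gatom_consts a)
           \<union> (\<Union>r \<in> dl_rules P. atom_consts (fst r) \<union> (\<Union>a \<in> set (snd r). atom_consts a))"

definition dl_model :: "('q, 'c, 'v) datalog \<Rightarrow> ('q, 'c) gatom set \<Rightarrow> bool" where
  "dl_model P I \<longleftrightarrow> dl_facts P \<subseteq> I \<and>
     (\<forall>r \<in> dl_rules P. \<forall>\<sigma>. ground_subst (dl_HU P) (dl_rule_vars r) \<sigma> \<longrightarrow>
        (\<forall>a \<in> set (snd r). inst \<sigma> a \<in> I) \<longrightarrow> inst \<sigma> (fst r) \<in> I)"

definition least_model :: "('q, 'c, 'v) datalog \<Rightarrow> ('q, 'c) gatom set" where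
  "least_model P = \<Inter> {I. dl_model P I}"

text \<open>Predicates of P_T: original predicates (Inl) and fresh aux_r predicates (Inr r),
  one for each rule r of T (strict: Inl, defeasible: Inr).\<close>
type_synonym ('p, 'c, 'v) rid = "('p, 'c, 'v) srule + ('p, 'c, 'v) drule"
type_synonym ('p, 'c, 'v) dlpred = "'p + ('p, 'c, 'v) rid"

definition rid_vars :: "('p, 'c, 'v) rid \<Rightarrow> 'v set" where
  "rid_vars r = (case r of Inl s \<Rightarrow> srule_vars s | Inr d \<Rightarrow> drule_vars d)"

definition rid_varlist :: "('p, 'c, 'v) rid \<Rightarrow> 'v list" where
  "rid_varlist r = (SOME xs. distinct xs \<and> set xs = rid_vars r)"

definition lift :: "('p, 'c, 'v) atom \<Rightarrow> (('p, 'c, 'v) dlpred, 'c, 'v) atom" where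
  "lift a = (Inl (fst a), snd a)"

definition glift :: "('p, 'c) gatom \<Rightarrow> (('p, 'c, 'v) dlpred, 'c) gatom" where
  "glift a = (Inl (fst a), snd a)"

definition aux_atom :: "('p, 'c, 'v) rid \<Rightarrow> (('p, 'c, 'v) dlpred, 'c, 'v) atom" where
  "aux_atom r = (Inr r, map Var (rid_varlist r))"

definition P_T :: "('p, 'c, 'v) arg_theory \<Rightarrow> (('p, 'c, 'v) dlpred, 'c, 'v) datalog" where
  "P_T T =
     \<lparr> dl_facts = glift ` (Kn T \<union> Kp T),
       dl_rules =
         {(aux_atom (Inl r), map lift (fst r)) | r. r \<in> Rs T}
       \<union> {(lift (snd r), [aux_atom (Inl r)]) | r. r \<in> Rs T}
       \<union> {(aux_atom (Inr r), map lift b) | r b h n. r \<in> Rd T \<and> r = (b, h, n)}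
       \<union> {(lift h, [aux_atom (Inr r)]) | r b h n. r \<in> Rd T \<and> r = (b, h, n)}
       \<union> {(lift n, [aux_atom (Inr r)]) | r b h n. r \<in> Rd T \<and> r = (b, h, n)} \<rparr>"

definition dl_grounding :: "('p, 'c, 'v) arg_theory \<Rightarrow> ('p, 'c) gtheory" where
  "dl_grounding T =
     (let M = least_model (P_T T) in
     \<lparr> gKn = Kn T, gKp = Kp T,
       gR = {inst_s \<sigma> r | r \<sigma>. r \<in> Rs T \<and> ground_subst (HU T) (srule_vars r) \<sigma>
                               \<and> inst \<sigma> (aux_atom (Inl r)) \<in> M}
          \<union> {inst_d \<sigma> r | r \<sigma>. r \<in> Rd T \<and> ground_subst (HU T) (drule_vars r) \<sigma>
                               \<and> inst \<sigma> (aux_atom (Inr r)) \<in> M},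
       gC = {inst_c \<sigma> c | c \<sigma>. c \<in> Cr T \<and> ground_subst (HU T) (crule_vars c) \<sigma>
                               \<and> inst \<sigma> (lift (fst c)) \<in> M} \<rparr>)"

end

(* An argument of the full grounding G(T) is a derivation tree that the Datalog program P_T
   replays bottom-up. By induction on arguments, the least model M of P_T contains the
   conclusion of every argument of G(T), the aux atom of every rule instance it uses, and the
   head and name of each of its defeasible rule instances; premises are facts of P_T. Since
   every head and name variable occurs in the rule body, P_T is safe, so the restriction of
   Datalog substitutions to the Herbrand universe of P_T costs nothing. Consequently G_DL(T)
   keeps every rule instance occurring in an argument and every contrariness instance whose
   left-hand side is a weak point of an argument: both groundings have the same arguments and
   the same attacks, hence the same extensions under every semantics. *)

theory Submission
  imports Defs
begin

lemma finite_atom_vars: "finite (atom_vars a)"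
proof -
  have "finite (trm_vars t)" for t :: "('c, 'v) trm" by (cases t) auto
  then show ?thesis unfolding atom_vars_def by blast
qed

lemma var_in_inst: "x \<in> atom_vars a \<Longrightarrow> \<sigma> x \<in> set (snd (inst \<sigma> a))"
proof -
  assume "x \<in> atom_vars a"
  then obtain t where "t \<in> set (snd a)" "x \<in> trm_vars t" unfolding atom_vars_def by blast
  moreover from \<open>x \<in> trm_vars t\<close> have "t = Var x" by (cases t) auto
  ultimately show ?thesis unfolding inst_def by force
qed

lemma atom_vars_lift [simp]: "atom_vars (lift a) = atom_vars a"
  by (simp add: atom_vars_def lift_def)

lemma inst_lift: "inst \<sigma> (lift a) = glift (inst \<sigma> a)"
  by (simp add: inst_def lift_def glift_def)

lemma atom_vars_aux_atom [simp]: "atom_vars (aux_atom r) = rid_vars r"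
proof -
  have "finite (rid_vars r)"
    by (auto simp: rid_vars_def srule_vars_def drule_vars_def finite_atom_vars split: sum.split prod.split)
  then have "set (rid_varlist r) = rid_vars r"
    unfolding rid_varlist_def by (metis (mono_tags, lifting) finite_distinct_list someI_ex)
  then show ?thesis unfolding atom_vars_def aux_atom_def by auto
qed

lemma dl_model_least_model: "dl_model P (least_model P)"
  unfolding dl_model_def least_model_def by blast

lemma facts_subset_least_model: "dl_facts P \<subseteq> least_model P"
  using dl_model_least_model unfolding dl_model_def by blast

lemma least_model_consts_subset_HU:
  assumes "a \<in> least_model P" shows "set (snd a) \<subseteq> dl_HU P"
proof -
  let ?I = "{a. set (snd a) \<subseteq> dl_HU P}"
  have "dl_model P ?I"
    unfolding dl_model_def
  proof (intro conjI ballI allI impI)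
    show "dl_facts P \<subseteq> ?I" unfolding dl_HU_def gatom_consts_def by blast
  next
    fix r \<sigma> assume r: "r \<in> dl_rules P" and \<sigma>: "ground_subst (dl_HU P) (dl_rule_vars r) \<sigma>"
    have "trm_inst \<sigma> t \<in> dl_HU P" if "t \<in> set (snd (fst r))" for t
    proof (cases t)
      case (Cst c)
      then have "c \<in> atom_consts (fst r)" using that unfolding atom_consts_def by force
      then show ?thesis using Cst r unfolding dl_HU_def by auto
    next
      case (Var x)
      then have "x \<in> dl_rule_vars r" using that unfolding dl_rule_vars_def atom_vars_def by force
      then show ?thesis using Var \<sigma> unfolding ground_subst_def by simp
    qed
    then show "inst \<sigma> (fst r) \<in> ?I" by (auto simp: inst_def)
  qed
  then show ?thesis using assms unfolding least_model_def by blast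
qed

definition dl_safe :: "('q, 'c, 'v) datalog \<Rightarrow> bool" where
  "dl_safe P \<longleftrightarrow> (\<forall>r \<in> dl_rules P. dl_rule_vars r \<subseteq> (\<Union>a \<in> set (snd r). atom_vars a))"

text \<open>In a safe program the restriction of substitutions to the Herbrand universe is
  harmless: every variable is bound by a body atom in the model, whose constants lie in it.\<close>
lemma least_model_closed:
  assumes "dl_safe P" "r \<in> dl_rules P" "\<forall>a \<in> set (snd r). inst \<sigma> a \<in> least_model P"
  shows "inst \<sigma> (fst r) \<in> least_model P"
proof -
  have "ground_subst (dl_HU P) (dl_rule_vars r) \<sigma>"
    unfolding ground_subst_def
  proof
    fix x assume "x \<in> dl_rule_vars r"
    then obtain a where "a \<in> set (snd r)" "x \<in> atom_vars a"
      using assms(1,2) unfolding dl_safe_def by blast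
    then have "\<sigma> x \<in> set (snd (inst \<sigma> a))" "inst \<sigma> a \<in> least_model P"
      using assms(3) by (simp_all add: var_in_inst)
    then show "\<sigma> x \<in> dl_HU P" using least_model_consts_subset_HU by blast
  qed
  with assms(2,3) dl_model_least_model[of P] show ?thesis unfolding dl_model_def by blast
qed

lemma Rules_subset_gR: "A \<in> Args G \<Longrightarrow> Rules A \<subseteq> gR G"
  by (induction A rule: Args.induct) auto

lemma Args_transfer:
  assumes "A \<in> Args G" "gKn G \<union> gKp G \<subseteq> gKn G' \<union> gKp G'" "Rules A \<subseteq> gR G'"
  shows "A \<in> Args G'"
  using assms
proof (induction A rule: Args.induct)
  case (prem k)
  then show ?case by (auto intro: Args.prem)
next
  case (rule r As)
  then show ?case by (intro Args.rule) fastforce+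
qed

lemma attacks_restrict_contrariness:
  assumes "gKp G' = gKp G" "gC G' = {c \<in> gC G. P (fst c)}" "\<forall>s \<in> wp G A'. P s"
  shows "attacks G' A A' \<longleftrightarrow> attacks G A A'"
proof -
  have "wp G' A' = wp G A'" using assms(1) by (simp add: wp_def)
  then show ?thesis using assms(2,3) unfolding attacks_def by fastforce
qed

lemma full_grounding_simps:
  "gKn (full_grounding T) = Kn T" "gKp (full_grounding T) = Kp T"
  "gR (full_grounding T) = {inst_s \<sigma> r | r \<sigma>. r \<in> Rs T \<and> ground_subst (HU T) (srule_vars r) \<sigma>}
          \<union> {inst_d \<sigma> r | r \<sigma>. r \<in> Rd T \<and> ground_subst (HU T) (drule_vars r) \<sigma>}"
  "gC (full_grounding T) = {inst_c \<sigma> c | c \<sigma>. c \<in> Cr T \<and> ground_subst (HU T) (crule_vars c) \<sigma>}"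
  by (simp_all add: full_grounding_def)

lemma dl_grounding_simps:
  "gKn (dl_grounding T) = Kn T" "gKp (dl_grounding T) = Kp T"
  "gR (dl_grounding T) = {inst_s \<sigma> r | r \<sigma>. r \<in> Rs T \<and> ground_subst (HU T) (srule_vars r) \<sigma>
                               \<and> inst \<sigma> (aux_atom (Inl r)) \<in> least_model (P_T T)}
          \<union> {inst_d \<sigma> r | r \<sigma>. r \<in> Rd T \<and> ground_subst (HU T) (drule_vars r) \<sigma>
                               \<and> inst \<sigma> (aux_atom (Inr r)) \<in> least_model (P_T T)}"
  "gC (dl_grounding T) = {inst_c \<sigma> c | c \<sigma>. c \<in> Cr T \<and> ground_subst (HU T) (crule_vars c) \<sigma>
                               \<and> inst \<sigma> (lift (fst c)) \<in> least_model (P_T T)}"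
  by (simp_all add: dl_grounding_def Let_def)

lemma wf_theory_P_T_safe:
  assumes "wf_theory T" shows "dl_safe (P_T T)"
  unfolding dl_safe_def
proof
  let ?vars = "\<lambda>b. \<Union>a \<in> set b. atom_vars a"
  have wf_strict: "\<forall>(b, h) \<in> Rs T. atom_vars h \<subseteq> ?vars b"
    using assms unfolding wf_theory_def by (elim conjE)
  have wf_defeasible: "\<forall>(b, h, n) \<in> Rd T. atom_vars h \<subseteq> ?vars b \<and> atom_vars n \<subseteq> ?vars b"
    using assms unfolding wf_theory_def by (elim conjE)
  have strict: "atom_vars (snd r) \<subseteq> ?vars (fst r)" if "r \<in> Rs T" for r
    using bspec[OF wf_strict that] by (simp add: case_prod_beta)
  have defeasible: "atom_vars h \<subseteq> ?vars b \<and> atom_vars n \<subseteq> ?vars b"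
    if "(b, h, n) \<in> Rd T" for b h n
    using bspec[OF wf_defeasible that] by simp
  fix r assume "r \<in> dl_rules (P_T T)"
  then consider
      (strict_aux) r0 where "r0 \<in> Rs T" "r = (aux_atom (Inl r0), map lift (fst r0))"
    | (strict_head) r0 where "r0 \<in> Rs T" "r = (lift (snd r0), [aux_atom (Inl r0)])"
    | (defeasible_aux) b h n where "(b, h, n) \<in> Rd T" "r = (aux_atom (Inr (b, h, n)), map lift b)"
    | (defeasible_head) b h n where "(b, h, n) \<in> Rd T" "r = (lift h, [aux_atom (Inr (b, h, n))])"
    | (defeasible_name) b h n where "(b, h, n) \<in> Rd T" "r = (lift n, [aux_atom (Inr (b, h, n))])"
    unfolding P_T_def datalog.simps by (elim UnE CollectE exE conjE; blast)
  then show "dl_rule_vars r \<subseteq> (\<Union>a \<in> set (snd r). atom_vars a)"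
    by cases (use strict defeasible in \<open>auto simp: dl_rule_vars_def rid_vars_def
      srule_vars_def drule_vars_def\<close>)
qed

definition dl_derived :: "('p, 'c, 'v) arg_theory \<Rightarrow> ('p, 'c) gatom \<Rightarrow> bool" where
  "dl_derived T a \<longleftrightarrow> (glift a :: (('p, 'c, 'v) dlpred, 'c) gatom) \<in> least_model (P_T T)"

lemma dl_derived_premise: "a \<in> Kn T \<union> Kp T \<Longrightarrow> dl_derived T a"
  using facts_subset_least_model unfolding dl_derived_def P_T_def by fastforce

lemma P_T_srule_fires:
  assumes "wf_theory T" "r \<in> Rs T" "\<forall>a \<in> set (fst r). dl_derived T (inst \<sigma> a)"
  shows "inst \<sigma> (aux_atom (Inl r)) \<in> least_model (P_T T)" "dl_derived T (inst \<sigma> (snd r))"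
proof -
  note closed = least_model_closed[OF wf_theory_P_T_safe[OF assms(1)]]
  have "(aux_atom (Inl r), map lift (fst r)) \<in> dl_rules (P_T T)"
    "(lift (snd r), [aux_atom (Inl r)]) \<in> dl_rules (P_T T)"
    using assms(2) unfolding P_T_def datalog.simps by blast+
  with assms(3) show "inst \<sigma> (aux_atom (Inl r)) \<in> least_model (P_T T)"
    and "dl_derived T (inst \<sigma> (snd r))"
    by (auto simp: dl_derived_def inst_lift dest!: closed)
qed

lemma P_T_drule_fires:
  assumes "wf_theory T" "(b, h, n) \<in> Rd T" "\<forall>a \<in> set b. dl_derived T (inst \<sigma> a)"
  shows "inst \<sigma> (aux_atom (Inr (b, h, n))) \<in> least_model (P_T T)"
    "dl_derived T (inst \<sigma> h)" "dl_derived T (inst \<sigma> n)"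
proof -
  note closed = least_model_closed[OF wf_theory_P_T_safe[OF assms(1)]]
  have "(aux_atom (Inr (b, h, n)), map lift b) \<in> dl_rules (P_T T)"
    "(lift h, [aux_atom (Inr (b, h, n))]) \<in> dl_rules (P_T T)"
    "(lift n, [aux_atom (Inr (b, h, n))]) \<in> dl_rules (P_T T)"
    using assms(2) unfolding P_T_def datalog.simps by blast+
  with assms(3) show "inst \<sigma> (aux_atom (Inr (b, h, n))) \<in> least_model (P_T T)"
    and "dl_derived T (inst \<sigma> h)" "dl_derived T (inst \<sigma> n)"
    by (auto simp: dl_derived_def inst_lift dest!: closed)
qed

lemma full_grounding_rule_fires:
  assumes "wf_theory T" "r \<in> gR (full_grounding T)" "\<forall>a \<in> set (gbody r). dl_derived T a"
  shows "r \<in> gR (dl_grounding T)" "dl_derived T (ghead r)"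
    "\<And>b h n. r = GD b h n \<Longrightarrow> dl_derived T n"
proof -
  from assms(2) consider
      (strict) r0 \<sigma> where "r = inst_s \<sigma> r0" "r0 \<in> Rs T" "ground_subst (HU T) (srule_vars r0) \<sigma>"
    | (defeasible) b0 h0 n0 \<sigma> where "r = inst_d \<sigma> (b0, h0, n0)" "(b0, h0, n0) \<in> Rd T"
        "ground_subst (HU T) (drule_vars (b0, h0, n0)) \<sigma>"
    unfolding full_grounding_simps by auto
  then have "r \<in> gR (dl_grounding T) \<and> dl_derived T (ghead r)
      \<and> (\<forall>b h n. r = GD b h n \<longrightarrow> dl_derived T n)"
  proof cases
    case strict
    with assms(3) have "\<forall>a \<in> set (fst r0). dl_derived T (inst \<sigma> a)" by (simp add: inst_s_def)
    note fires = P_T_srule_fires[OF assms(1) strict(2) this]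
    have "r \<in> gR (dl_grounding T)"
      unfolding dl_grounding_simps using strict fires(1) by blast
    with fires(2) strict show ?thesis by (simp add: inst_s_def)
  next
    case defeasible
    with assms(3) have "\<forall>a \<in> set b0. dl_derived T (inst \<sigma> a)" by (simp add: inst_d_def)
    note fires = P_T_drule_fires[OF assms(1) defeasible(2) this]
    have "r \<in> gR (dl_grounding T)"
      unfolding dl_grounding_simps using defeasible fires(1) by blast
    with fires(2,3) defeasible show ?thesis by (fastforce simp: inst_d_def)
  qed
  then show "r \<in> gR (dl_grounding T)" "dl_derived T (ghead r)"
    "\<And>b h n. r = GD b h n \<Longrightarrow> dl_derived T n" by blast+
qed

lemma Args_full_grounding_derived:
  assumes "wf_theory T" "A \<in> Args (full_grounding T)"
  shows "dl_derived T (conc A) \<and> Rules A \<subseteq> gR (dl_grounding T)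
    \<and> (\<forall>b h n. GD b h n \<in> Rules A \<longrightarrow> dl_derived T h \<and> dl_derived T n)"
  using assms(2)
proof (induction A rule: Args.induct)
  case (prem k)
  then show ?case by (simp add: dl_derived_premise full_grounding_simps)
next
  case (rule r As)
  have IH: "dl_derived T (conc A) \<and> Rules A \<subseteq> gR (dl_grounding T)
      \<and> (\<forall>b h n. GD b h n \<in> Rules A \<longrightarrow> dl_derived T h \<and> dl_derived T n)"
    if "A \<in> set As" for A
    using rule.IH that by blast
  have "set (gbody r) = conc ` set As" using rule.hyps(2) by (metis list.set_map)
  then have "\<forall>a \<in> set (gbody r). dl_derived T a" using IH by auto
  note fires = full_grounding_rule_fires[OF assms(1) rule.hyps(1) this]
  have "GD b h n \<in> Rules (RuleArg As r) \<Longrightarrow> dl_derived T h \<and> dl_derived T n" for b h n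
    using IH fires(2) fires(3)[of b h n] by (cases "r = GD b h n") (auto simp del: split_paired_All)
  with IH fires(1,2) show ?case by auto
qed

lemma Args_dl_grounding:
  assumes "wf_theory T" shows "Args (dl_grounding T) = Args (full_grounding T)"
proof
  have same_premises:
      "gKn (dl_grounding T) \<union> gKp (dl_grounding T) = gKn (full_grounding T) \<union> gKp (full_grounding T)"
    by (simp add: dl_grounding_simps full_grounding_simps)
  have rules: "gR (dl_grounding T) \<subseteq> gR (full_grounding T)"
    unfolding dl_grounding_simps full_grounding_simps by blast
  show "Args (dl_grounding T) \<subseteq> Args (full_grounding T)"
  proof
    fix A assume "A \<in> Args (dl_grounding T)"
    with rules Rules_subset_gR show "A \<in> Args (full_grounding T)"
      by (intro Args_transfer[OF _ same_premises[THEN equalityD1]]) blast+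
  qed
  show "Args (full_grounding T) \<subseteq> Args (dl_grounding T)"
  proof
    fix A assume "A \<in> Args (full_grounding T)"
    with Args_full_grounding_derived[OF assms] show "A \<in> Args (dl_grounding T)"
      by (intro Args_transfer[OF _ same_premises[THEN equalityD2]]) blast+
  qed
qed

lemma gC_dl_grounding: "gC (dl_grounding T) = {c \<in> gC (full_grounding T). dl_derived T (fst c)}"
  unfolding dl_grounding_simps full_grounding_simps dl_derived_def inst_lift
  by (force simp: inst_c_def simp del: split_paired_Ex split_paired_All)

lemma wp_full_grounding_derived:
  assumes "wf_theory T" "A \<in> Args (full_grounding T)" "s \<in> wp (full_grounding T) A"
  shows "dl_derived T s"
proof -
  from assms(3) consider "s \<in> Kp T" | b h n where "GD b h n \<in> Rules A" "s = h \<or> s = n"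
    unfolding wp_def full_grounding_simps by blast
  then show ?thesis
    using Args_full_grounding_derived[OF assms(1,2)] dl_derived_premise by cases blast+
qed

lemma Att_dl_grounding:
  assumes "wf_theory T" shows "Att (dl_grounding T) = Att (full_grounding T)"
proof -
  have "attacks (dl_grounding T) A A' \<longleftrightarrow> attacks (full_grounding T) A A'"
    if "A' \<in> Args (full_grounding T)" for A A'
    using wp_full_grounding_derived[OF assms that]
    by (intro attacks_restrict_contrariness[OF _ gC_dl_grounding])
      (simp_all add: dl_grounding_simps full_grounding_simps)
  with Args_dl_grounding[OF assms] show ?thesis unfolding Att_def by auto
qed

theorem theorem1:
  fixes T :: "('p, 'c, 'v) arg_theory"
  assumes "wf_theory T"
  shows "\<forall>s \<in> {Complete, Grounded, Preferred, Stable}.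
           sem_theory s T = sem_ground s (full_grounding T)
         \<and> sem_ground s (full_grounding T) = sem_ground s (dl_grounding T)"
  using Args_dl_grounding[OF assms] Att_dl_grounding[OF assms]
  by (simp add: sem_theory_def sem_ground_def)

end
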